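(* Fix a number $x$ (real or complex). For a real parameter $\alpha$, say a sequence $(u_n)_{n\ge0}$ satisfies (RE($\alpha$)) if $(n+\alpha)u_{n+1}=2xn\,u_n-(n-\alpha)u_{n-1}$ for all $n\ge1$ (and a sequence $(w_n)_{n\ge1}$ satisfies it for $n\ge2$ if the same identity holds for all $n\ge2$). If $(u_n)_{n\ge0}$ satisfies $(n+\tfrac12)u_{n+1}=2xn\,u_n-(n-\tfrac12)u_{n-1}$ for all $n\ge1$, and $\hat u_n=\frac1n\,(u_{n+1}-u_{n-1})$ for $n\ge1$, then $(n+\tfrac32)\hat u_{n+1}=2xn\,\hat u_n-(n-\tfrac32)\hat u_{n-1}$ for all $n\ge2$. *)

theory Defs
  imports Complex_Main
begin

definition RE :: "complex \<Rightarrow> real \<Rightarrow> (nat \<Rightarrow> complex) \<Rightarrow> bool" where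
  "RE x \<alpha> u \<longleftrightarrow> (\<forall>n\<ge>1. (of_nat n + of_real \<alpha>) * u (n+1)
        = 2 * x * of_nat n * u n - (of_nat n - of_real \<alpha>) * u (n-1))"

definition RE_from2 :: "complex \<Rightarrow> real \<Rightarrow> (nat \<Rightarrow> complex) \<Rightarrow> bool" where
  "RE_from2 x \<alpha> w \<longleftrightarrow> (\<forall>n\<ge>2. (of_nat n + of_real \<alpha>) * w (n+1)
        = 2 * x * of_nat n * w n - (of_nat n - of_real \<alpha>) * w (n-1))"

end

theory Submission
  imports Defs
begin

text \<open>Differencing the recurrence RE(\<alpha>) raises the parameter by one: combining the
  recurrence at n - 1 and at n + 1 (with weights n + 1 and n - 1) eliminates everything
  except the differences u(k+1) - u(k-1), and dividing by k turns these into the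
  difference quotients.\<close>

lemma recurrence_difference_identity:
  fixes m a x v0 v1 v2 v3 v4 :: "'a::comm_ring_1"
  assumes upper: "(m + 1 + a) * v4 = 2 * x * (m + 1) * v3 - (m + 1 - a) * v2"
    and lower: "(m - 1 + a) * v2 = 2 * x * (m - 1) * v1 - (m - 1 - a) * v0"
  shows "(m - 1) * (m + 1 + a) * (v4 - v2)
    = 2 * x * (m + 1) * (m - 1) * (v3 - v1) - (m + 1) * (m - 1 - a) * (v2 - v0)"
proof -
  have "(m - 1) * (m + 1 + a) * (v4 - v2)
      - (2 * x * (m + 1) * (m - 1) * (v3 - v1) - (m + 1) * (m - 1 - a) * (v2 - v0))
    = (m - 1) * ((m + 1 + a) * v4 - (2 * x * (m + 1) * v3 - (m + 1 - a) * v2))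
      - (m + 1) * ((m - 1 + a) * v2 - (2 * x * (m - 1) * v1 - (m - 1 - a) * v0))"
    by (simp add: algebra_simps)
  with upper lower show ?thesis
    by simp
qed

lemma recurrence_difference_quotient:
  fixes m a x v0 v1 v2 v3 v4 :: "'a::field"
  assumes upper: "(m + 1 + a) * v4 = 2 * x * (m + 1) * v3 - (m + 1 - a) * v2"
    and lower: "(m - 1 + a) * v2 = 2 * x * (m - 1) * v1 - (m - 1 - a) * v0"
    and "m - 1 \<noteq> 0" "m \<noteq> 0" "m + 1 \<noteq> 0"
  shows "(m + (a + 1)) * ((v4 - v2) / (m + 1))
    = 2 * x * m * ((v3 - v1) / m) - (m - (a + 1)) * ((v2 - v0) / (m - 1))"
proof -
  have "(m + (a + 1)) * ((v4 - v2) / (m + 1))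
      = (m - 1) * (m + 1 + a) * (v4 - v2) / ((m - 1) * (m + 1))"
    using assms(3,5) by (simp add: ac_simps)
  also have "\<dots> = (2 * x * (m + 1) * (m - 1) * (v3 - v1) - (m + 1) * (m - 1 - a) * (v2 - v0))
      / ((m - 1) * (m + 1))"
    by (simp only: recurrence_difference_identity [OF upper lower])
  also have "\<dots> = 2 * x * m * ((v3 - v1) / m) - (m - (a + 1)) * ((v2 - v0) / (m - 1))"
    using assms(3-5) by (simp add: divide_simps) algebra
  finally show ?thesis .
qed

lemma RE_difference_quotient:
  fixes x :: complex and u w :: "nat \<Rightarrow> complex"
  assumes "RE x \<alpha> u"
    and w: "\<And>n. n \<ge> 1 \<Longrightarrow> w n = (u (n+1) - u (n-1)) / of_nat n"
  shows "RE_from2 x (\<alpha> + 1) w"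
  unfolding RE_from2_def
proof (intro allI impI)
  fix n :: nat
  assume "n \<ge> 2"
  define m :: complex where "m = of_nat n"
  define a :: complex where "a = of_real \<alpha>"
  have m_minus_1: "of_nat (n - 1) = m - 1"
    using \<open>n \<ge> 2\<close> by (simp add: m_def of_nat_diff)
  have RE_at: "(of_nat k + a) * u (k+1) = 2 * x * of_nat k * u k - (of_nat k - a) * u (k-1)"
    if "k \<ge> 1" for k
    using \<open>RE x \<alpha> u\<close> that unfolding RE_def a_def by blast
  have upper: "(m + 1 + a) * u (n+2) = 2 * x * (m + 1) * u (n+1) - (m + 1 - a) * u n"
    using RE_at[of "n+1"] by (simp add: m_def algebra_simps)
  have lower: "(m - 1 + a) * u n = 2 * x * (m - 1) * u (n-1) - (m - 1 - a) * u (n-2)"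
    using RE_at[of "n-1"] \<open>n \<ge> 2\<close> m_minus_1 by (simp add: numeral_2_eq_2)
  have w_next: "w (n+1) = (u (n+2) - u n) / (m + 1)"
    using w[of "n+1"] by (simp add: m_def add.assoc)
  have w_here: "w n = (u (n+1) - u (n-1)) / m"
    using w[of n] \<open>n \<ge> 2\<close> by (simp add: m_def)
  have w_prev: "w (n-1) = (u n - u (n-2)) / (m - 1)"
    using w[of "n-1"] \<open>n \<ge> 2\<close> m_minus_1 by (simp add: numeral_2_eq_2)
  have m_plus_1: "m + 1 = of_nat (n + 1)"
    by (simp add: m_def)
  have "m - 1 \<noteq> 0"
    unfolding m_minus_1 [symmetric] of_nat_eq_0_iff using \<open>n \<ge> 2\<close> by simp
  moreover have "m \<noteq> 0"
    using \<open>n \<ge> 2\<close> by (simp add: m_def)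
  moreover have "m + 1 \<noteq> 0"
    unfolding m_plus_1 of_nat_eq_0_iff by simp
  ultimately show "(of_nat n + of_real (\<alpha> + 1)) * w (n+1)
      = 2 * x * of_nat n * w n - (of_nat n - of_real (\<alpha> + 1)) * w (n-1)"
    unfolding w_next w_here w_prev of_real_add of_real_1 m_def [symmetric] a_def [symmetric]
    by (rule recurrence_difference_quotient [OF upper lower])
qed

theorem theorem1:
  fixes x :: complex and u uhat :: "nat \<Rightarrow> complex"
  assumes "RE x (1/2) u"
    and "\<And>n. n \<ge> 1 \<Longrightarrow> uhat n = (u (n+1) - u (n-1)) / of_nat n"
  shows "RE_from2 x (3/2) uhat"
  using RE_difference_quotient[OF assms] by simp

end
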